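(* Let $X$ be a non-degenerate real-valued random variable with density $f_X$, CDF $F_X$, survival function $S_X=1-F_X$ and finite second moment. If $f_X$ is log-concave, then both $F_X$ and $S_X$ are log-concave; equivalently, the hazard rate $h_X=f_X/S_X$ is increasing and the reverse hazard rate $r_X=f_X/F_X$ is decreasing. Consequently $\mathrm{SD}[X]\le\mathrm{GMD}[X]$, where $\mathrm{SD}[X]=\sqrt{\tfrac12\mathbb{E}[(X-X')^2]}$ and $\mathrm{GMD}[X]=\mathbb{E}|X-X'|$ with $X'$ an independent copy of $X$.
   Context: Log-concavity and monotonicity are understood on the relevant support; monotonicity is non-strict. *)

theory Defs
  imports "HOL-Probability.Probability"
begin

text \<open>Log-concavity of a real function, understood on its support \<open>{x. g x > 0}\<close>:
  the support is convex and \<open>ln g\<close> is concave on it, i.e.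
  \<open>g (t x + (1-t) y) \<ge> g x ^ t * g y ^ (1-t)\<close> whenever \<open>g x, g y > 0\<close>, \<open>t \<in> [0,1]\<close>.\<close>
definition log_concave :: "(real \<Rightarrow> real) \<Rightarrow> bool" where
  "log_concave g \<longleftrightarrow>
     (\<forall>x y t. 0 < g x \<longrightarrow> 0 < g y \<longrightarrow> 0 \<le> t \<longrightarrow> t \<le> 1 \<longrightarrow>
        g x powr t * g y powr (1 - t) \<le> g (t * x + (1 - t) * y))"

end

theory Submission
  imports Defs
begin

text \<open>
  For a nonnegative function, log-concavity means that the translation kernel
  \<open>(x, y) \<mapsto> f (x - y)\<close> is totally positive of order 2 (PF2); conversely, a continuous PF2
  function is log-concave, because its logarithm is midpoint concave on intervals where it is
  positive. By Karlin's basic composition formula, integrating a bounded TP2 kernel against a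
  PF2 density gives a TP2 kernel again. With indicator kernels this makes \<open>F\<close> and \<open>S\<close> PF2,
  hence log-concave; the monotonicity of the hazard rates is a direct consequence of PF2 for
  \<open>f\<close>. With the kernel \<open>F\<close> it shows that \<open>G c = P(X - X' \<ge> c)\<close> satisfies
  \<open>G 0 * G (a + b) \<le> G a * G b\<close> for \<open>a, b \<ge> 0\<close>, and since \<open>G 0 \<ge> 1/2\<close> by symmetry,
  \<open>G (a + b) \<le> 2 * G a * G b\<close>. Writing \<open>E (X - X')\<^sub>+ = \<integral>\<^sub>0\<^sup>\<infinity> G\<close> and
  \<open>E (X - X')\<^sub>+\<^sup>2 = 2 \<integral>\<^sub>0\<^sup>\<infinity>\<integral>\<^sub>0\<^sup>\<infinity> G (a + b)\<close> yields
  \<open>E (X - X')\<^sup>2 \<le> 2 (E \<bar>X - X'\<bar>)\<^sup>2\<close>, which is \<open>SD \<le> GMD\<close>.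
\<close>

definition TP2 :: "(real \<Rightarrow> real \<Rightarrow> real) \<Rightarrow> bool" where
  "TP2 K \<longleftrightarrow> (\<forall>a1 a2 z1 z2. a1 \<le> a2 \<longrightarrow> z1 \<le> z2 \<longrightarrow> K a1 z2 * K a2 z1 \<le> K a1 z1 * K a2 z2)"

definition PF2 :: "(real \<Rightarrow> real) \<Rightarrow> bool" where
  "PF2 g \<longleftrightarrow> TP2 (\<lambda>x y. g (x - y))"

lemma TP2D:
  "TP2 K \<Longrightarrow> a1 \<le> a2 \<Longrightarrow> z1 \<le> z2 \<Longrightarrow> K a1 z2 * K a2 z1 \<le> K a1 z1 * K a2 z2"
  unfolding TP2_def by blast

lemma TP2_transpose: "TP2 K \<Longrightarrow> TP2 (\<lambda>z a. K a z)"
  unfolding TP2_def by (metis mult.commute)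

lemma PF2_iff_shift:
  "PF2 g \<longleftrightarrow> (\<forall>x y u. x \<le> y \<longrightarrow> 0 \<le> u \<longrightarrow> g x * g (y + u) \<le> g (x + u) * g y)"
  unfolding PF2_def TP2_def
proof (intro iffI allI impI)
  fix x y u :: real
  assume shift: "\<forall>a1 a2 z1 z2. a1 \<le> a2 \<longrightarrow> z1 \<le> z2 \<longrightarrow> g (a1 - z2) * g (a2 - z1) \<le> g (a1 - z1) * g (a2 - z2)"
    and "x \<le> y" "0 \<le> u"
  then show "g x * g (y + u) \<le> g (x + u) * g y"
    using shift[rule_format, of "x + u" "y + u" 0 u] by simp
next
  fix a1 a2 z1 z2 :: real
  assume shift: "\<forall>x y u. x \<le> y \<longrightarrow> 0 \<le> u \<longrightarrow> g x * g (y + u) \<le> g (x + u) * g y"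
    and "a1 \<le> a2" "z1 \<le> z2"
  then show "g (a1 - z2) * g (a2 - z1) \<le> g (a1 - z1) * g (a2 - z2)"
    using shift[rule_format, of "a1 - z2" "a2 - z2" "z2 - z1"] by (simp add: algebra_simps)
qed

lemma PF2_shiftD: "PF2 g \<Longrightarrow> x \<le> y \<Longrightarrow> 0 \<le> u \<Longrightarrow> g x * g (y + u) \<le> g (x + u) * g y"
  unfolding PF2_iff_shift by blast

lemma log_concave_imp_PF2:
  fixes g :: "real \<Rightarrow> real"
  assumes lc: "log_concave g" and nonneg: "\<And>x. 0 \<le> g x"
  shows "PF2 g"
  unfolding PF2_iff_shift
proof (intro allI impI)
  fix x y u :: real
  assume "x \<le> y" "0 \<le> u"
  show "g x * g (y + u) \<le> g (x + u) * g y"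
  proof (cases "g x = 0 \<or> g (y + u) = 0 \<or> u = 0 \<or> x = y")
    case True
    then show ?thesis using nonneg[of "x + u"] nonneg[of y] by auto
  next
    case False
    with \<open>x \<le> y\<close> \<open>0 \<le> u\<close> nonneg have gx: "0 < g x" and gyu: "0 < g (y + u)"
      and "x < y" "0 < u" by (auto simp: order_less_le)
    define t where "t = (y - x) / (y + u - x)"
    have t: "0 \<le> t" "t \<le> 1" "t * (y + u - x) = y - x"
      using \<open>x < y\<close> \<open>0 < u\<close> by (auto simp: t_def field_simps)
    \<comment> \<open>\<open>x + u\<close> and \<open>y\<close> are the convex combinations of \<open>x\<close> and \<open>y + u\<close> with weights \<open>t\<close> and \<open>1 - t\<close>\<close>
    have "t * x + (1 - t) * (y + u) = x + u" "(1 - t) * x + (1 - (1 - t)) * (y + u) = y"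
      using t(3) by (simp_all add: algebra_simps)
    then have at_xu: "g x powr t * g (y + u) powr (1 - t) \<le> g (x + u)"
      and at_y: "g x powr (1 - t) * g (y + u) powr t \<le> g y"
      using lc[unfolded log_concave_def, rule_format, OF gx gyu, of t]
        lc[unfolded log_concave_def, rule_format, OF gx gyu, of "1 - t"] t(1,2)
      by simp_all
    have "g x * g (y + u)
        = (g x powr t * g x powr (1 - t)) * (g (y + u) powr (1 - t) * g (y + u) powr t)"
      using gx gyu by (simp add: powr_add[symmetric])
    also have "\<dots> = (g x powr t * g (y + u) powr (1 - t)) * (g x powr (1 - t) * g (y + u) powr t)"
      by (simp add: mult_ac)
    also have "\<dots> \<le> g (x + u) * g y"
      using at_xu at_y by (intro mult_mono) (auto simp: nonneg)
    finally show ?thesis .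
  qed
qed

lemma continuous_midpoint_concave_ge_min:
  fixes \<psi> :: "real \<Rightarrow> real"
  assumes cont: "continuous_on {a..b} \<psi>"
    and mid: "\<And>z d. 0 < d \<Longrightarrow> z - d \<in> {a..b} \<Longrightarrow> z + d \<in> {a..b} \<Longrightarrow>
      \<psi> (z - d) + \<psi> (z + d) \<le> 2 * \<psi> z"
    and z: "z \<in> {a..b}"
  shows "min (\<psi> a) (\<psi> b) \<le> \<psi> z"
proof -
  obtain z1 where z1: "z1 \<in> {a..b}" and min: "\<And>w. w \<in> {a..b} \<Longrightarrow> \<psi> z1 \<le> \<psi> w"
    using continuous_attains_inf[OF compact_Icc _ cont] z by fastforce
  have "min (\<psi> a) (\<psi> b) \<le> \<psi> z1"
  proof (rule ccontr)
    assume below: "\<not> min (\<psi> a) (\<psi> b) \<le> \<psi> z1"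
    \<comment> \<open>the leftmost minimiser is interior, and its midpoint inequality is strict\<close>
    define C where "C = {w \<in> {a..b}. \<psi> w = \<psi> z1}"
    have "closed C"
      unfolding C_def by (rule continuous_closed_preimage_constant[OF cont closed_atLeastAtMost])
    moreover have "C \<noteq> {}" and bdd: "bdd_below C"
      using z1 by (auto simp: C_def intro: bdd_belowI[of _ a])
    ultimately have "Inf C \<in> C" by (intro closed_contains_Inf)
    then have z0: "Inf C \<in> {a..b}" "\<psi> (Inf C) = \<psi> z1"
      by (auto simp: C_def)
    then have "a < Inf C" "Inf C < b"
      using below by (auto simp: order_le_less)
    define d where "d = min (Inf C - a) (b - Inf C)"
    have d: "0 < d" "Inf C - d \<in> {a..b}" "Inf C + d \<in> {a..b}"
      using \<open>a < Inf C\<close> \<open>Inf C < b\<close> by (auto simp: d_def)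
    have "Inf C - d \<notin> C"
      using cInf_lower[OF _ bdd, of "Inf C - d"] \<open>0 < d\<close> by auto
    then have "\<psi> z1 < \<psi> (Inf C - d)"
      using min[OF d(2)] d(2) by (auto simp: C_def)
    moreover have "\<psi> z1 \<le> \<psi> (Inf C + d)"
      using min[OF d(3)] .
    ultimately show False
      using mid[OF d] z0(2) by simp
  qed
  with min[OF z] show ?thesis by simp
qed

lemma PF2_pos_between:
  assumes "PF2 g" "\<And>x. 0 \<le> g x" "0 < g x" "0 < g y" "z \<in> {x..y}"
  shows "0 < g z"
proof -
  have "g x * g y \<le> g (x + (y - z)) * g z"
    using PF2_shiftD[OF \<open>PF2 g\<close>, of x z "y - z"] assms(5) by auto
  moreover have "0 < g x * g y"
    using assms by simp
  ultimately show ?thesis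
    using assms(2)[of z] assms(2)[of "x + (y - z)"] by (cases "g z = 0") auto
qed

lemma PF2_ln_midpoint_concave:
  assumes "PF2 g" "0 \<le> d" "0 < g (z - d)" "0 < g (z + d)" "0 < g z"
  shows "ln (g (z - d)) + ln (g (z + d)) \<le> 2 * ln (g z)"
proof -
  have "g (z - d) * g (z + d) \<le> g z * g z"
    using PF2_shiftD[OF \<open>PF2 g\<close>, of "z - d" z d] \<open>0 \<le> d\<close> by simp
  then have "ln (g (z - d) * g (z + d)) \<le> ln (g z * g z)"
    using assms by simp
  then show ?thesis
    using assms by (simp add: ln_mult)
qed

lemma PF2_log_concave_on_interval:
  fixes g :: "real \<Rightarrow> real"
  assumes "PF2 g" and cont: "\<And>x. isCont g x" and nonneg: "\<And>x. 0 \<le> g x"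
    and "x < y" "0 < g x" "0 < g y" "0 \<le> t" "t \<le> 1"
  shows "g x powr t * g y powr (1 - t) \<le> g (t * x + (1 - t) * y)"
proof -
  have pos: "0 < g w" if "w \<in> {x..y}" for w
    using PF2_pos_between[OF \<open>PF2 g\<close> nonneg \<open>0 < g x\<close> \<open>0 < g y\<close> that] .
  define s where "s = (ln (g y) - ln (g x)) / (y - x)"
  define \<psi> where "\<psi> w = ln (g w) - (ln (g x) + (w - x) * s)" for w
  have "continuous_on {x..y} \<psi>"
    unfolding \<psi>_def using pos
    by (intro continuous_intros continuous_at_imp_continuous_on) (force simp: cont)+
  moreover have "\<psi> (w - d) + \<psi> (w + d) \<le> 2 * \<psi> w"
    if "0 < d" "w - d \<in> {x..y}" "w + d \<in> {x..y}" for w d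
  proof -
    have "w \<in> {x..y}" using that by auto
    then show ?thesis
      using PF2_ln_midpoint_concave[OF \<open>PF2 g\<close>, of d w] pos that
      by (auto simp: \<psi>_def algebra_simps)
  qed
  moreover have mem: "t * x + (1 - t) * y \<in> {x..y}"
  proof -
    have "0 \<le> (1 - t) * (y - x)" "0 \<le> t * (y - x)"
      using assms by simp_all
    then show ?thesis
      by (auto simp: algebra_simps)
  qed
  ultimately have "min (\<psi> x) (\<psi> y) \<le> \<psi> (t * x + (1 - t) * y)"
    by (rule continuous_midpoint_concave_ge_min)
  moreover have "\<psi> x = 0" "\<psi> y = 0"
    using \<open>x < y\<close> by (auto simp: \<psi>_def s_def)
  moreover have "(t * x + (1 - t) * y - x) * s = (1 - t) * (ln (g y) - ln (g x))"
    using \<open>x < y\<close> by (simp add: s_def field_simps)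
  ultimately have "t * ln (g x) + (1 - t) * ln (g y) \<le> ln (g (t * x + (1 - t) * y))"
    by (simp add: \<psi>_def algebra_simps)
  then have "exp (t * ln (g x) + (1 - t) * ln (g y)) \<le> g (t * x + (1 - t) * y)"
    using pos[OF mem] by (metis exp_le_cancel_iff exp_ln)
  then show ?thesis
    using assms by (simp add: powr_def exp_add mult.commute)
qed

lemma PF2_imp_log_concave:
  fixes g :: "real \<Rightarrow> real"
  assumes "PF2 g" and cont: "\<And>x. isCont g x" and nonneg: "\<And>x. 0 \<le> g x"
  shows "log_concave g"
  unfolding log_concave_def
proof (intro allI impI)
  fix x y t :: real
  assume pos: "0 < g x" "0 < g y" and t: "0 \<le> t" "t \<le> 1"
  consider "x < y" | "x = y" | "y < x"
    by linarith
  then show "g x powr t * g y powr (1 - t) \<le> g (t * x + (1 - t) * y)"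
  proof cases
    case 1
    show ?thesis
      using PF2_log_concave_on_interval[OF assms 1 pos t] .
  next
    case 2
    then show ?thesis
      using pos by (simp add: powr_add[symmetric] algebra_simps)
  next
    case 3
    then show ?thesis
      using PF2_log_concave_on_interval[OF assms 3 pos(2,1), of "1 - t"] t
      by (simp add: algebra_simps)
  qed
qed

lemma TP2_minors_mult_nonneg:
  assumes "TP2 K" "TP2 L" "a1 \<le> a2" "b1 \<le> b2"
  shows "0 \<le> (K a1 z * K a2 w - K a1 w * K a2 z) * (L b1 z * L b2 w - L b1 w * L b2 z)"
proof (cases "z \<le> w")
  case True
  then show ?thesis
    using TP2D[OF assms(1,3) True] TP2D[OF assms(2,4) True] by simp
next
  case False
  then have "w \<le> z" by simp
  then show ?thesis
    using TP2D[OF assms(1,3) \<open>w \<le> z\<close>] TP2D[OF assms(2,4) \<open>w \<le> z\<close>]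
    by (simp add: mult_nonpos_nonpos)
qed

lemma (in pair_sigma_finite) integrable_mult_fst_snd:
  fixes g :: "'a \<Rightarrow> real" and h :: "'b \<Rightarrow> real"
  assumes g: "integrable M1 g" and h: "integrable M2 h"
  shows "integrable (M1 \<Otimes>\<^sub>M M2) (\<lambda>p. g (fst p) * h (snd p))"
proof -
  have [measurable]: "g \<in> borel_measurable M1" "h \<in> borel_measurable M2"
    using g h by auto
  have "(\<integral>\<^sup>+p. ennreal (norm (g (fst p) * h (snd p))) \<partial>(M1 \<Otimes>\<^sub>M M2))
      = (\<integral>\<^sup>+x. \<integral>\<^sup>+y. ennreal (norm (g x)) * ennreal (norm (h y)) \<partial>M2 \<partial>M1)"
    by (subst M2.nn_integral_fst[symmetric]) (auto simp: abs_mult ennreal_mult)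
  also have "\<dots> = (\<integral>\<^sup>+x. ennreal (norm (g x)) \<partial>M1) * (\<integral>\<^sup>+y. ennreal (norm (h y)) \<partial>M2)"
    by (simp add: nn_integral_cmult nn_integral_multc)
  also have "\<dots> < \<infinity>"
    using g h unfolding integrable_iff_bounded by (simp add: ennreal_mult_less_top)
  finally show ?thesis
    unfolding integrable_iff_bounded by simp
qed

lemma (in pair_sigma_finite) integral_mult_fst_snd:
  fixes g :: "'a \<Rightarrow> real" and h :: "'b \<Rightarrow> real"
  assumes "integrable M1 g" "integrable M2 h"
  shows "(\<integral>p. g (fst p) * h (snd p) \<partial>(M1 \<Otimes>\<^sub>M M2)) = (\<integral>x. g x \<partial>M1) * (\<integral>y. h y \<partial>M2)"
  using integral_fst'[OF integrable_mult_fst_snd[OF assms]] by simp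

lemma (in sigma_finite_measure) integral_pair_nonneg_if_symmetrization_nonneg:
  fixes R :: "'a \<times> 'a \<Rightarrow> real"
  assumes int: "integrable (M \<Otimes>\<^sub>M M) R" and sym: "\<And>x y. 0 \<le> R (x, y) + R (y, x)"
  shows "0 \<le> (\<integral>p. R p \<partial>(M \<Otimes>\<^sub>M M))"
proof -
  interpret pair_sigma_finite M M ..
  have int_swap: "integrable (M \<Otimes>\<^sub>M M) (\<lambda>(x, y). R (y, x))"
    using integrable_product_swap[OF int] .
  have "0 \<le> (\<integral>(x, y). R (x, y) + R (y, x) \<partial>(M \<Otimes>\<^sub>M M))"
    using sym by (intro integral_nonneg_AE AE_I2) (simp add: sym split: prod.split)
  also have "\<dots> = (\<integral>p. R p \<partial>(M \<Otimes>\<^sub>M M)) + (\<integral>(x, y). R (y, x) \<partial>(M \<Otimes>\<^sub>M M))"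
    using int int_swap by (simp add: case_prod_beta' split_beta')
  also have "(\<integral>(x, y). R (y, x) \<partial>(M \<Otimes>\<^sub>M M)) = (\<integral>p. R p \<partial>(M \<Otimes>\<^sub>M M))"
    using integral_product_swap[of R] int by auto
  finally show ?thesis by simp
qed

lemma pred_mem_atLeast [measurable (raw)]:
  fixes f g :: "'a \<Rightarrow> real"
  assumes [measurable]: "f \<in> borel_measurable M" "g \<in> borel_measurable M"
  shows "Measurable.pred M (\<lambda>x. g x \<in> {f x..})"
  unfolding atLeast_iff by measurable

lemma nn_integral_layer_pos_part:
  "(\<integral>\<^sup>+b. indicator {0..} b * indicator {c + b..} d \<partial>lborel) = ennreal (d - c)"
proof -
  have "(\<integral>\<^sup>+b. indicator {0..} b * indicator {c + b..} d \<partial>lborel) = (\<integral>\<^sup>+b. indicator {0..d - c} b \<partial>lborel)"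
    by (intro nn_integral_cong) (auto split: split_indicator)
  then show ?thesis
    by (cases "0 \<le> d - c") (auto simp: ennreal_neg)
qed

lemma nn_integral_pos_part_half_square:
  "(\<integral>\<^sup>+a. indicator {0..} a * ennreal (d - a) \<partial>lborel) = ennreal ((max 0 d)\<^sup>2 / 2)"
proof (cases "0 \<le> d")
  case True
  have "(\<integral>\<^sup>+a. indicator {0..} a * ennreal (d - a) \<partial>lborel)
      = (\<integral>\<^sup>+a. ennreal (d - a) * indicator {0..d} a \<partial>lborel)"
    by (intro nn_integral_cong) (auto split: split_indicator simp: ennreal_neg)
  also have "\<dots> = ennreal ((\<lambda>a. d * a - a\<^sup>2 / 2) d - (\<lambda>a. d * a - a\<^sup>2 / 2) 0)"
    by (rule nn_integral_FTC_Icc) (auto intro!: derivative_eq_intros simp: True)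
  finally show ?thesis
    using True by (simp add: power2_eq_square)
next
  case False
  then have "(\<lambda>a. indicator {0..} a * ennreal (d - a)) = (\<lambda>a::real. 0)"
    by (auto split: split_indicator simp: ennreal_neg)
  then show ?thesis
    using False by simp
qed

lemma (in prob_space) distributed_joint_indep_lborel:
  fixes X Y :: "'a \<Rightarrow> real"
  assumes X: "distributed M lborel X Px" and Y: "distributed M lborel Y Py"
    and indep: "indep_var borel X borel Y"
  shows "distributed M (lborel \<Otimes>\<^sub>M lborel) (\<lambda>\<omega>. (X \<omega>, Y \<omega>)) (\<lambda>(x, y). Px x * Py y)"
proof (rule distributed_joint_indep'[OF _ _ X Y])
  have "distr M borel X \<Otimes>\<^sub>M distr M borel Y = distr M (borel \<Otimes>\<^sub>M borel) (\<lambda>\<omega>. (X \<omega>, Y \<omega>))"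
    using indep unfolding indep_var_distribution_eq by simp
  moreover have "sets (lborel \<Otimes>\<^sub>M lborel) = sets (borel \<Otimes>\<^sub>M (borel :: real measure))"
    by (intro sets_pair_measure_cong) simp_all
  ultimately show "distr M lborel X \<Otimes>\<^sub>M distr M lborel Y = distr M (lborel \<Otimes>\<^sub>M lborel) (\<lambda>\<omega>. (X \<omega>, Y \<omega>))"
    by (metis (no_types) distr_cong sets_lborel)
qed (simp_all add: lborel.sigma_finite_measure_axioms)

locale log_concave_density =
  fixes f :: "real \<Rightarrow> real"
  assumes f_nonneg: "\<And>x. 0 \<le> f x"
    and f_measurable [measurable]: "f \<in> borel_measurable borel"
    and f_integrable: "integrable lborel f"
    and f_integral: "(\<integral>x. f x \<partial>lborel) = 1"
    and f_log_concave: "log_concave f"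
begin

lemma PF2_f: "PF2 f"
  using log_concave_imp_PF2[OF f_log_concave f_nonneg] .

lemma nn_integral_f: "(\<integral>\<^sup>+x. ennreal (f x) \<partial>lborel) = 1"
  using nn_integral_eq_integral[OF f_integrable] f_nonneg f_integral by simp

lemma integral_shift: "(\<integral>z. g (z + c) * f z \<partial>lborel) = (\<integral>w. g w * f (w - c) \<partial>lborel)"
  using lborel_integral_real_affine[of 1 "\<lambda>w. g w * f (w - c)" c] by (simp add: add.commute)

lemma integrable_bounded_mult_shift:
  fixes g :: "real \<Rightarrow> real"
  assumes [measurable]: "g \<in> borel_measurable borel" and bounded: "\<And>w. \<bar>g w\<bar> \<le> B"
  shows "integrable lborel (\<lambda>w. g w * f (w - c))"
proof (rule Bochner_Integration.integrable_bound)
  have "integrable lborel (\<lambda>w. f (- c + 1 * w))"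
    by (rule lborel_integrable_real_affine[OF f_integrable]) simp
  then show "integrable lborel (\<lambda>w. B * f (w - c))"
    by simp
  show "AE w in lborel. norm (g w * f (w - c)) \<le> norm (B * f (w - c))"
    using bounded f_nonneg by (auto simp: abs_mult intro!: mult_right_mono order.trans[OF _ abs_ge_self])
qed simp

lemma TP2_composition:
  fixes K :: "real \<Rightarrow> real \<Rightarrow> real"
  assumes "TP2 K" and [measurable]: "\<And>a. K a \<in> borel_measurable borel"
    and bounded: "\<And>a w. \<bar>K a w\<bar> \<le> B"
  shows "TP2 (\<lambda>a c. \<integral>z. K a (z + c) * f z \<partial>lborel)"
proof -
  define \<phi> where "\<phi> a c = (\<lambda>w. K a w * f (w - c))" for a c
  have int: "integrable lborel (\<phi> a c)" for a c
    unfolding \<phi>_def by (rule integrable_bounded_mult_shift[OF _ bounded]) simp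
  have TP2_f: "TP2 (\<lambda>c w. f (w - c))"
    using TP2_transpose[OF PF2_f[unfolded PF2_def]] .
  show ?thesis
    unfolding TP2_def integral_shift
  proof (intro allI impI)
    fix a1 a2 c1 c2 :: real
    assume "a1 \<le> a2" "c1 \<le> c2"
    define R where "R p = \<phi> a1 c1 (fst p) * \<phi> a2 c2 (snd p) - \<phi> a1 c2 (fst p) * \<phi> a2 c1 (snd p)"
      for p
    have "0 \<le> (\<integral>p. R p \<partial>(lborel \<Otimes>\<^sub>M lborel))"
    proof (rule lborel.integral_pair_nonneg_if_symmetrization_nonneg)
      show "integrable (lborel \<Otimes>\<^sub>M lborel) R"
        unfolding R_def by (intro Bochner_Integration.integrable_diff lborel_pair.integrable_mult_fst_snd int)
      fix x y :: real
      have "R (x, y) + R (y, x)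
          = (K a1 x * K a2 y - K a1 y * K a2 x) * (f (x - c1) * f (y - c2) - f (y - c1) * f (x - c2))"
        unfolding R_def \<phi>_def by (simp add: algebra_simps)
      then show "0 \<le> R (x, y) + R (y, x)"
        using TP2_minors_mult_nonneg[OF \<open>TP2 K\<close> TP2_f \<open>a1 \<le> a2\<close> \<open>c1 \<le> c2\<close>, of x y] by simp
    qed
    also have "(\<integral>p. R p \<partial>(lborel \<Otimes>\<^sub>M lborel))
        = integral\<^sup>L lborel (\<phi> a1 c1) * integral\<^sup>L lborel (\<phi> a2 c2)
          - integral\<^sup>L lborel (\<phi> a1 c2) * integral\<^sup>L lborel (\<phi> a2 c1)"
      unfolding R_def
      by (simp add: Bochner_Integration.integral_diff lborel_pair.integrable_mult_fst_snd
          lborel_pair.integral_mult_fst_snd int)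
    finally show "(\<integral>w. K a1 w * f (w - c2) \<partial>lborel) * (\<integral>w. K a2 w * f (w - c1) \<partial>lborel)
        \<le> (\<integral>w. K a1 w * f (w - c1) \<partial>lborel) * (\<integral>w. K a2 w * f (w - c2) \<partial>lborel)"
      unfolding \<phi>_def by simp
  qed
qed

definition F :: "real \<Rightarrow> real" where
  "F x = (\<integral>y. indicator {..x} y * f y \<partial>lborel)"

definition S :: "real \<Rightarrow> real" where
  "S x = (\<integral>y. indicator {x<..} y * f y \<partial>lborel)"

lemma integrable_indicator_f: "A \<in> sets borel \<Longrightarrow> integrable lborel (\<lambda>y. indicator A y * f y)"
  using integrable_mult_indicator[of A lborel f] f_integrable by (simp add: mult.commute)

lemma F_nonneg: "0 \<le> F x"
  unfolding F_def by (intro integral_nonneg_AE) (auto simp: f_nonneg)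

lemma F_mono: "x \<le> y \<Longrightarrow> F x \<le> F y"
  unfolding F_def
  by (intro integral_mono integrable_indicator_f) (auto simp: f_nonneg split: split_indicator)

lemma F_le_1: "F x \<le> 1"
proof -
  have "F x \<le> (\<integral>y. f y \<partial>lborel)"
    unfolding F_def
    by (intro integral_mono integrable_indicator_f f_integrable) (auto simp: f_nonneg split: split_indicator)
  then show ?thesis
    using f_integral by simp
qed

lemma F_measurable [measurable]: "F \<in> borel_measurable borel"
  by (rule borel_measurable_mono) (auto simp: mono_def F_mono)

lemma S_eq: "S x = 1 - F x"
proof -
  have "F x + S x = (\<integral>y. indicator {..x} y * f y + indicator {x<..} y * f y \<partial>lborel)"
    unfolding F_def S_def by (intro Bochner_Integration.integral_add[symmetric] integrable_indicator_f) auto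
  also have "\<dots> = (\<integral>y. f y \<partial>lborel)"
    by (intro Bochner_Integration.integral_cong) (auto split: split_indicator)
  finally show ?thesis
    using f_integral by simp
qed

lemma PF2_F: "PF2 F"
proof -
  have "TP2 (\<lambda>a c. \<integral>z. indicator {..a} (z + c) * f z \<partial>lborel)"
    by (rule TP2_composition[where B = 1]) (auto simp: TP2_def split: split_indicator)
  moreover have "indicator {..a} (z + c) = (indicator {..a - c} z :: real)" for a c z :: real
    by (auto split: split_indicator)
  ultimately show ?thesis
    by (simp add: PF2_def F_def)
qed

lemma PF2_S: "PF2 S"
proof -
  have "TP2 (\<lambda>a c. \<integral>z. indicator {a<..} (z + c) * f z \<partial>lborel)"
    by (rule TP2_composition[where B = 1]) (auto simp: TP2_def split: split_indicator)
  moreover have "indicator {a<..} (z + c) = (indicator {a - c<..} z :: real)" for a c z :: real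
    by (auto split: split_indicator)
  ultimately show ?thesis
    by (simp add: PF2_def S_def)
qed

lemma ennreal_integral_indicator_f:
  assumes "A \<in> sets borel"
  shows "ennreal (\<integral>y. indicator A y * f y \<partial>lborel) = (\<integral>\<^sup>+y. ennreal (f y) * indicator A y \<partial>lborel)"
proof -
  have "ennreal (\<integral>y. indicator A y * f y \<partial>lborel) = (\<integral>\<^sup>+y. ennreal (indicator A y * f y) \<partial>lborel)"
    using assms by (intro nn_integral_eq_integral[symmetric] integrable_indicator_f) (auto simp: f_nonneg)
  also have "\<dots> = (\<integral>\<^sup>+y. ennreal (f y) * indicator A y \<partial>lborel)"
    by (intro nn_integral_cong) (auto split: split_indicator)
  finally show ?thesis .
qed

lemma measure_density_f:
  assumes "A \<in> sets borel"
  shows "measure (density lborel f) A = (\<integral>y. indicator A y * f y \<partial>lborel)"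
proof -
  have "0 \<le> (\<integral>y. indicator A y * f y \<partial>lborel)"
    by (intro integral_nonneg_AE) (auto simp: f_nonneg)
  then show ?thesis
    using assms by (simp add: measure_def emeasure_density ennreal_integral_indicator_f[symmetric])
qed

lemma F_eq_cdf: "F = cdf (density lborel f)"
  by (simp add: fun_eq_iff cdf_def2 F_def measure_density_f)

lemma isCont_F: "isCont F x"
proof -
  interpret real_distribution "density lborel f"
    by (intro real_distribution.intro prob_spaceI real_distribution_axioms.intro)
      (simp_all add: emeasure_density nn_integral_f)
  have "(\<integral>y. indicator {x} y * f y \<partial>lborel) = 0"
    by (intro integral_eq_zero_AE) (rule AE_mp[OF AE_lborel_singleton[of x]], simp)
  then show ?thesis
    unfolding F_eq_cdf by (simp add: isCont_cdf measure_density_f)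
qed

lemma log_concave_F: "log_concave F"
  using PF2_imp_log_concave[OF PF2_F isCont_F F_nonneg] .

lemma isCont_S: "isCont S x"
  unfolding S_eq[abs_def] using isCont_F by (intro continuous_intros)

lemma S_nonneg: "0 \<le> S x"
  using F_le_1 by (simp add: S_eq)

lemma log_concave_S: "log_concave S"
  using PF2_imp_log_concave[OF PF2_S isCont_S S_nonneg] .

lemma f_mult_S_le:
  assumes "x \<le> y"
  shows "f x * S y \<le> f y * S x"
proof -
  have "S x = (\<integral>z. indicator {y<..} (z + (y - x)) * f z \<partial>lborel)"
    unfolding S_def by (intro Bochner_Integration.integral_cong) (auto split: split_indicator)
  also have "\<dots> = (\<integral>w. indicator {y<..} w * f (w - (y - x)) \<partial>lborel)"
    by (rule integral_shift)
  finally have S_x: "S x = (\<integral>w. indicator {y<..} w * f (w - (y - x)) \<partial>lborel)" .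
  have "f x * S y = (\<integral>w. f x * (indicator {y<..} w * f w) \<partial>lborel)"
    unfolding S_def by simp
  also have "\<dots> \<le> (\<integral>w. f y * (indicator {y<..} w * f (w - (y - x))) \<partial>lborel)"
  proof (intro integral_mono)
    show "integrable lborel (\<lambda>w. f x * (indicator {y<..} w * f w))"
      using integrable_indicator_f by simp
    show "integrable lborel (\<lambda>w. f y * (indicator {y<..} w * f (w - (y - x))))"
      using integrable_bounded_mult_shift[of "indicator {y<..}" 1] by simp
    fix w
    show "f x * (indicator {y<..} w * f w) \<le> f y * (indicator {y<..} w * f (w - (y - x)))"
      using PF2_shiftD[OF PF2_f, of x "w - (y - x)" "y - x"] assms
      by (auto split: split_indicator simp: mult.commute)
  qed
  also have "\<dots> = f y * S x"
    unfolding S_x by simp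
  finally show ?thesis .
qed

lemma f_mult_F_le:
  assumes "x \<le> y"
  shows "f y * F x \<le> f x * F y"
proof -
  have "F y = (\<integral>z. indicator {..x} (z + (x - y)) * f z \<partial>lborel)"
    unfolding F_def by (intro Bochner_Integration.integral_cong) (auto split: split_indicator)
  also have "\<dots> = (\<integral>w. indicator {..x} w * f (w - (x - y)) \<partial>lborel)"
    by (rule integral_shift)
  finally have F_y: "F y = (\<integral>w. indicator {..x} w * f (w - (x - y)) \<partial>lborel)" .
  have "f y * F x = (\<integral>w. f y * (indicator {..x} w * f w) \<partial>lborel)"
    unfolding F_def by simp
  also have "\<dots> \<le> (\<integral>w. f x * (indicator {..x} w * f (w - (x - y))) \<partial>lborel)"
  proof (intro integral_mono)
    show "integrable lborel (\<lambda>w. f y * (indicator {..x} w * f w))"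
      using integrable_indicator_f by simp
    show "integrable lborel (\<lambda>w. f x * (indicator {..x} w * f (w - (x - y))))"
      using integrable_bounded_mult_shift[of "indicator {..x}" 1] by simp
    fix w
    show "f y * (indicator {..x} w * f w) \<le> f x * (indicator {..x} w * f (w - (x - y)))"
      using PF2_shiftD[OF PF2_f, of w x "y - x"] assms
      by (auto split: split_indicator simp: mult.commute add_diff_eq diff_diff_eq2)
  qed
  also have "\<dots> = f x * F y"
    unfolding F_y by simp
  finally show ?thesis .
qed

lemma hazard_rate_mono: "mono_on {x. 0 < S x} (\<lambda>x. f x / S x)"
  by (rule mono_onI) (use f_mult_S_le in \<open>auto simp: field_simps\<close>)

lemma reverse_hazard_rate_antimono: "antimono_on {x. 0 < F x} (\<lambda>x. f x / F x)"
  by (rule monotone_onI) (use f_mult_F_le in \<open>auto simp: field_simps\<close>)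

text \<open>\<open>diff_tail c\<close> is \<open>P(X - X' \<ge> c)\<close> for independent \<open>X, X'\<close> with density \<open>f\<close>.\<close>
definition diff_tail :: "real \<Rightarrow> real" where
  "diff_tail c = (\<integral>z. F (z - c) * f z \<partial>lborel)"

lemma diff_tail_nonneg: "0 \<le> diff_tail c"
  unfolding diff_tail_def by (intro integral_nonneg_AE) (auto simp: f_nonneg F_nonneg)

lemma PF2_diff_tail: "PF2 diff_tail"
proof -
  have "TP2 (\<lambda>a w. F (w - a))"
    using TP2_transpose[OF PF2_F[unfolded PF2_def]] .
  moreover have "\<bar>F (w - a)\<bar> \<le> 1" for a w
    using F_nonneg F_le_1 by (simp add: abs_le_iff)
  ultimately have "TP2 (\<lambda>a c. \<integral>z. F (z + c - a) * f z \<partial>lborel)"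
    using TP2_composition[of "\<lambda>a w. F (w - a)" 1] by simp
  then show ?thesis
    by (simp add: PF2_def diff_tail_def algebra_simps)
qed

lemma diff_tail_NBU: "0 \<le> a \<Longrightarrow> 0 \<le> b \<Longrightarrow> diff_tail 0 * diff_tail (a + b) \<le> diff_tail a * diff_tail b"
  using PF2_shiftD[OF PF2_diff_tail, of 0 a b] by (simp add: mult.commute)

definition diff_moment :: "(real \<Rightarrow> ennreal) \<Rightarrow> ennreal" where
  "diff_moment \<phi> = (\<integral>\<^sup>+z. \<integral>\<^sup>+y. ennreal (f z) * ennreal (f y) * \<phi> (z - y) \<partial>lborel \<partial>lborel)"

lemma diff_moment_reflect:
  assumes [measurable]: "\<phi> \<in> borel_measurable borel"
  shows "diff_moment (\<lambda>d. \<phi> (- d)) = diff_moment \<phi>"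
proof -
  have "diff_moment (\<lambda>d. \<phi> (- d))
      = (\<integral>\<^sup>+z. \<integral>\<^sup>+y. ennreal (f z) * ennreal (f y) * \<phi> (y - z) \<partial>lborel \<partial>lborel)"
    by (simp add: diff_moment_def)
  also have "\<dots> = (\<integral>\<^sup>+y. \<integral>\<^sup>+z. ennreal (f z) * ennreal (f y) * \<phi> (y - z) \<partial>lborel \<partial>lborel)"
    by (rule lborel_pair.Fubini'[symmetric]) measurable
  finally show ?thesis
    by (simp add: diff_moment_def mult.commute)
qed

lemma diff_moment_add:
  assumes [measurable]: "\<phi> \<in> borel_measurable borel" "\<psi> \<in> borel_measurable borel"
  shows "diff_moment (\<lambda>d. \<phi> d + \<psi> d) = diff_moment \<phi> + diff_moment \<psi>"
  unfolding diff_moment_def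
  by (simp add: distrib_left nn_integral_add)

lemma diff_moment_cmult:
  assumes [measurable]: "\<phi> \<in> borel_measurable borel"
  shows "diff_moment (\<lambda>d. c * \<phi> d) = c * diff_moment \<phi>"
  unfolding diff_moment_def
  by (simp add: nn_integral_cmult[symmetric] mult_ac)

lemma diff_moment_mono: "(\<And>d. \<phi> d \<le> \<psi> d) \<Longrightarrow> diff_moment \<phi> \<le> diff_moment \<psi>"
  unfolding diff_moment_def by (intro nn_integral_mono mult_left_mono) auto

lemma diff_moment_const: "diff_moment (\<lambda>_. c) = c"
  by (simp add: diff_moment_def nn_integral_cmult nn_integral_multc nn_integral_f mult_ac)

lemma diff_moment_nn_integral:
  fixes H :: "real \<Rightarrow> real \<Rightarrow> ennreal"
  assumes [measurable]: "case_prod H \<in> borel_measurable (borel \<Otimes>\<^sub>M borel)"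
  shows "diff_moment (\<lambda>d. \<integral>\<^sup>+a. H a d \<partial>lborel) = (\<integral>\<^sup>+a. diff_moment (H a) \<partial>lborel)"
proof -
  have "diff_moment (\<lambda>d. \<integral>\<^sup>+a. H a d \<partial>lborel)
      = (\<integral>\<^sup>+z. \<integral>\<^sup>+y. \<integral>\<^sup>+a. ennreal (f z) * ennreal (f y) * H a (z - y) \<partial>lborel \<partial>lborel \<partial>lborel)"
    unfolding diff_moment_def by (simp add: nn_integral_cmult)
  also have "\<dots> = (\<integral>\<^sup>+z. \<integral>\<^sup>+a. \<integral>\<^sup>+y. ennreal (f z) * ennreal (f y) * H a (z - y) \<partial>lborel \<partial>lborel \<partial>lborel)"
    by (intro nn_integral_cong lborel_pair.Fubini') measurable
  also have "\<dots> = (\<integral>\<^sup>+a. diff_moment (H a) \<partial>lborel)"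
    unfolding diff_moment_def by (rule lborel_pair.Fubini') measurable
  finally show ?thesis .
qed

lemma ennreal_diff_tail: "ennreal (diff_tail c) = diff_moment (indicator {c..})"
proof -
  have "ennreal (diff_tail c) = (\<integral>\<^sup>+z. ennreal (f z) * ennreal (F (z - c)) \<partial>lborel)"
    unfolding diff_tail_def
    using integrable_bounded_mult_shift[of "\<lambda>z. F (z - c)" 1 0] F_nonneg F_le_1
    by (subst nn_integral_eq_integral[symmetric])
      (auto simp: f_nonneg ennreal_mult' abs_le_iff mult.commute intro!: nn_integral_cong)
  also have "\<dots> = (\<integral>\<^sup>+z. ennreal (f z) * (\<integral>\<^sup>+y. ennreal (f y) * indicator {..z - c} y \<partial>lborel) \<partial>lborel)"
    unfolding F_def by (simp add: ennreal_integral_indicator_f)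
  also have "\<dots> = diff_moment (indicator {c..})"
  proof -
    have "indicator {..z - c} y = (indicator {c..} (z - y) :: ennreal)" for z y
      by (auto split: split_indicator)
    then show ?thesis
      unfolding diff_moment_def by (simp add: nn_integral_cmult[symmetric] mult.assoc)
  qed
  finally show ?thesis .
qed

lemma diff_tail_measurable [measurable]: "(\<lambda>c. ennreal (diff_tail c)) \<in> borel_measurable borel"
  unfolding diff_tail_def by measurable

lemma diff_tail_0_ge_half: "1 \<le> 2 * diff_tail 0"
proof -
  have "ennreal 1 = diff_moment (\<lambda>_. 1)"
    by (simp add: diff_moment_const)
  also have "\<dots> \<le> diff_moment (\<lambda>d. indicator {0..} d + indicator {0..} (- d))"
    by (intro diff_moment_mono) (auto split: split_indicator)
  also have "\<dots> = 2 * ennreal (diff_tail 0)"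
    by (simp add: diff_moment_add diff_moment_reflect ennreal_diff_tail mult_2)
  also have "\<dots> = ennreal (2 * diff_tail 0)"
    using diff_tail_nonneg by (simp add: ennreal_mult)
  finally show ?thesis
    using diff_tail_nonneg by (simp add: ennreal_le_iff)
qed

lemma diff_tail_add_le:
  assumes "0 \<le> a" "0 \<le> b"
  shows "diff_tail (a + b) \<le> 2 * diff_tail a * diff_tail b"
proof -
  have "diff_tail (a + b) \<le> (2 * diff_tail 0) * diff_tail (a + b)"
    using diff_tail_0_ge_half diff_tail_nonneg[of "a + b"] by (simp add: mult_le_cancel_right1)
  also have "\<dots> \<le> 2 * (diff_tail a * diff_tail b)"
    using diff_tail_NBU[OF assms] by simp
  finally show ?thesis
    by simp
qed

text \<open>Since \<open>ennreal\<close> truncates negative numbers to \<open>0\<close>, \<open>diff_moment ennreal\<close> is \<open>E (X - X')\<^sub>+\<close>.\<close>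
lemma diff_moment_pos_part:
  "diff_moment ennreal = (\<integral>\<^sup>+a. indicator {0..} a * ennreal (diff_tail a) \<partial>lborel)"
proof -
  have "diff_moment ennreal = diff_moment (\<lambda>d. \<integral>\<^sup>+a. indicator {0..} a * indicator {a..} d \<partial>lborel)"
    by (rule arg_cong[where f = diff_moment], rule ext) (use nn_integral_layer_pos_part[of 0] in simp)
  also have "\<dots> = (\<integral>\<^sup>+a. diff_moment (\<lambda>d. indicator {0..} a * indicator {a..} d) \<partial>lborel)"
    by (rule diff_moment_nn_integral) measurable
  also have "\<dots> = (\<integral>\<^sup>+a. indicator {0..} a * ennreal (diff_tail a) \<partial>lborel)"
    by (simp add: diff_moment_cmult ennreal_diff_tail)
  finally show ?thesis .
qed

lemma diff_moment_pos_part_square: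
  "diff_moment (\<lambda>d. ennreal ((max 0 d)\<^sup>2))
    = 2 * (\<integral>\<^sup>+a. indicator {0..} a *
             (\<integral>\<^sup>+b. indicator {0..} b * ennreal (diff_tail (a + b)) \<partial>lborel) \<partial>lborel)"
proof -
  have "ennreal ((max 0 d)\<^sup>2) = ennreal 2 * ennreal ((max 0 d)\<^sup>2 / 2)" for d :: real
    using ennreal_mult[of 2 "(max 0 d)\<^sup>2 / 2"] by simp
  also have "\<dots> d = 2 * (\<integral>\<^sup>+a. indicator {0..} a *
      (\<integral>\<^sup>+b. indicator {0..} b * indicator {a + b..} d \<partial>lborel) \<partial>lborel)" for d
    by (simp add: nn_integral_layer_pos_part nn_integral_pos_part_half_square)
  finally have "diff_moment (\<lambda>d. ennreal ((max 0 d)\<^sup>2))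
      = 2 * diff_moment (\<lambda>d. \<integral>\<^sup>+a. indicator {0..} a *
          (\<integral>\<^sup>+b. indicator {0..} b * indicator {a + b..} d \<partial>lborel) \<partial>lborel)"
    by (simp add: diff_moment_cmult)
  also have "\<dots> = 2 * (\<integral>\<^sup>+a. indicator {0..} a *
      diff_moment (\<lambda>d. \<integral>\<^sup>+b. indicator {0..} b * indicator {a + b..} d \<partial>lborel) \<partial>lborel)"
    by (subst diff_moment_nn_integral) (measurable, simp add: diff_moment_cmult)
  also have "\<dots> = 2 * (\<integral>\<^sup>+a. indicator {0..} a *
      (\<integral>\<^sup>+b. indicator {0..} b * ennreal (diff_tail (a + b)) \<partial>lborel) \<partial>lborel)"
    by (subst diff_moment_nn_integral) (measurable, simp add: diff_moment_cmult ennreal_diff_tail)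
  finally show ?thesis .
qed

lemma diff_moment_pos_part_square_le:
  "diff_moment (\<lambda>d. ennreal ((max 0 d)\<^sup>2)) \<le> 4 * (diff_moment ennreal)\<^sup>2"
proof -
  define I where "I = (\<integral>\<^sup>+a. indicator {0..} a * ennreal (diff_tail a) \<partial>lborel)"
  have bound: "ennreal (diff_tail (a + b)) \<le> 2 * ennreal (diff_tail a) * ennreal (diff_tail b)"
    if "0 \<le> a" "0 \<le> b" for a b
  proof -
    have "ennreal (diff_tail (a + b)) \<le> ennreal (2 * diff_tail a * diff_tail b)"
      using diff_tail_add_le[OF that] by (rule ennreal_leI)
    also have "\<dots> = 2 * ennreal (diff_tail a) * ennreal (diff_tail b)"
      using diff_tail_nonneg by (simp add: ennreal_mult)
    finally show ?thesis .
  qed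
  have inner: "indicator {0..} a * (\<integral>\<^sup>+b. indicator {0..} b * ennreal (diff_tail (a + b)) \<partial>lborel)
      \<le> indicator {0..} a *
          (\<integral>\<^sup>+b. indicator {0..} b * (2 * ennreal (diff_tail a) * ennreal (diff_tail b)) \<partial>lborel)" for a
  proof (cases "0 \<le> a")
    case True
    then show ?thesis
      by (intro mult_left_mono[OF nn_integral_mono]) (auto split: split_indicator simp: bound)
  qed simp
  have "diff_moment (\<lambda>d. ennreal ((max 0 d)\<^sup>2))
      \<le> 2 * (\<integral>\<^sup>+a. indicator {0..} a *
          (\<integral>\<^sup>+b. indicator {0..} b * (2 * ennreal (diff_tail a) * ennreal (diff_tail b)) \<partial>lborel) \<partial>lborel)"
    unfolding diff_moment_pos_part_square by (rule mult_left_mono[OF nn_integral_mono, OF inner]) simp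
  also have "\<dots> = 2 * (\<integral>\<^sup>+a. (2 * I) * (indicator {0..} a * ennreal (diff_tail a)) \<partial>lborel)"
    unfolding I_def by (simp add: nn_integral_cmult[symmetric] mult_ac)
  also have "\<dots> = 2 * (2 * I * I)"
    unfolding I_def by (subst nn_integral_cmult) (simp add: mult.assoc, measurable)
  also have "\<dots> = 4 * I\<^sup>2"
    by (simp add: power2_eq_square mult_ac)
  finally show ?thesis
    unfolding I_def diff_moment_pos_part .
qed

lemma diff_moment_square_le: "diff_moment (\<lambda>d. ennreal (d\<^sup>2)) \<le> 2 * (diff_moment (\<lambda>d. ennreal \<bar>d\<bar>))\<^sup>2"
proof -
  have "(\<lambda>d. ennreal (d\<^sup>2)) = (\<lambda>d. ennreal ((max 0 d)\<^sup>2) + ennreal ((max 0 (- d))\<^sup>2))"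
    by (rule ext, simp flip: ennreal_plus add: max_def)
  then have square: "diff_moment (\<lambda>d. ennreal (d\<^sup>2)) = 2 * diff_moment (\<lambda>d. ennreal ((max 0 d)\<^sup>2))"
    by (simp add: diff_moment_add diff_moment_reflect[where \<phi> = "\<lambda>d. ennreal ((max 0 d)\<^sup>2)"] mult_2)
  have "(\<lambda>d. ennreal \<bar>d\<bar>) = (\<lambda>d. ennreal d + ennreal (- d))"
    by (rule ext, simp flip: ennreal_plus add: abs_if ennreal_neg)
  then have abs: "diff_moment (\<lambda>d. ennreal \<bar>d\<bar>) = 2 * diff_moment ennreal"
    by (simp add: diff_moment_add diff_moment_reflect[where \<phi> = ennreal] mult_2)
  show ?thesis
    unfolding square abs using diff_moment_pos_part_square_le
    by (simp add: power2_eq_square mult_ac mult_left_mono)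
qed

lemma measure_le_eq_F:
  assumes "prob_space M" and X: "distributed M lborel X (\<lambda>x. ennreal (f x))"
  shows "measure M {\<omega> \<in> space M. X \<omega> \<le> x} = F x"
proof -
  have [measurable]: "X \<in> borel_measurable M"
    using distributed_measurable[OF X] by simp
  have "measure M {\<omega> \<in> space M. X \<omega> \<le> x} = measure (distr M lborel X) {..x}"
    by (subst measure_distr) (auto intro!: arg_cong[where f = "measure M"])
  also have "\<dots> = F x"
    unfolding distributed_distr_eq_density[OF X] F_def by (simp add: measure_density_f)
  finally show ?thesis .
qed

lemma nn_integral_diff_eq_diff_moment:
  assumes "prob_space M"
    and X: "distributed M lborel X (\<lambda>x. ennreal (f x))"
    and X': "distributed M lborel X' (\<lambda>x. ennreal (f x))"
    and indep: "prob_space.indep_var M borel X borel X'"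
    and [measurable]: "\<phi> \<in> borel_measurable borel"
  shows "(\<integral>\<^sup>+\<omega>. \<phi> (X \<omega> - X' \<omega>) \<partial>M) = diff_moment \<phi>"
proof -
  have "distributed M (lborel \<Otimes>\<^sub>M lborel) (\<lambda>\<omega>. (X \<omega>, X' \<omega>)) (\<lambda>(x, y). ennreal (f x) * ennreal (f y))"
    using prob_space.distributed_joint_indep_lborel[OF assms(1-4)] .
  from distributed_nn_integral[OF this, of "\<lambda>p. \<phi> (fst p - snd p)"]
  have "(\<integral>\<^sup>+\<omega>. \<phi> (X \<omega> - X' \<omega>) \<partial>M)
      = (\<integral>\<^sup>+p. ennreal (f (fst p)) * ennreal (f (snd p)) * \<phi> (fst p - snd p) \<partial>(lborel \<Otimes>\<^sub>M lborel))"
    by (simp add: case_prod_beta)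
  also have "\<dots> = diff_moment \<phi>"
    unfolding diff_moment_def by (subst lborel.nn_integral_fst[symmetric]) auto
  finally show ?thesis .
qed

lemma SD_le_GMD:
  assumes "prob_space M"
    and X: "distributed M lborel X (\<lambda>x. ennreal (f x))"
    and X': "distributed M lborel X' (\<lambda>x. ennreal (f x))"
    and indep: "prob_space.indep_var M borel X borel X'"
  shows "sqrt (1/2 * (\<integral>\<omega>. (X \<omega> - X' \<omega>)\<^sup>2 \<partial>M)) \<le> (\<integral>\<omega>. \<bar>X \<omega> - X' \<omega>\<bar> \<partial>M)"
proof (cases "integrable M (\<lambda>\<omega>. (X \<omega> - X' \<omega>)\<^sup>2)")
  case False
  then show ?thesis
    by (simp add: not_integrable_integral_eq)
next
  case True
  interpret prob_space M by fact
  have [measurable]: "X \<in> borel_measurable M" "X' \<in> borel_measurable M"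
    using distributed_measurable[OF X] distributed_measurable[OF X'] by simp_all
  have "integrable M (\<lambda>\<omega>. X \<omega> - X' \<omega>)"
    using square_integrable_imp_integrable[OF _ True] by simp
  then have abs_int: "integrable M (\<lambda>\<omega>. \<bar>X \<omega> - X' \<omega>\<bar>)"
    by simp
  define V where "V = (\<integral>\<omega>. (X \<omega> - X' \<omega>)\<^sup>2 \<partial>M)"
  define G where "G = (\<integral>\<omega>. \<bar>X \<omega> - X' \<omega>\<bar> \<partial>M)"
  have "G \<ge> 0"
    unfolding G_def by simp
  have "ennreal V = diff_moment (\<lambda>d. ennreal (d\<^sup>2))"
    unfolding V_def using nn_integral_diff_eq_diff_moment[OF assms, of "\<lambda>d. ennreal (d\<^sup>2)"]
    by (simp add: nn_integral_eq_integral[OF True, symmetric])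
  also have "\<dots> \<le> 2 * (diff_moment (\<lambda>d. ennreal \<bar>d\<bar>))\<^sup>2"
    by (rule diff_moment_square_le)
  also have "diff_moment (\<lambda>d. ennreal \<bar>d\<bar>) = ennreal G"
    unfolding G_def using nn_integral_diff_eq_diff_moment[OF assms, of "\<lambda>d. ennreal \<bar>d\<bar>"]
    by (simp add: nn_integral_eq_integral[OF abs_int, symmetric])
  also have "2 * (ennreal G)\<^sup>2 = ennreal (2 * G\<^sup>2)"
    using \<open>G \<ge> 0\<close> by (simp add: ennreal_mult ennreal_power)
  finally have "1/2 * V \<le> G\<^sup>2"
    by (subst (asm) ennreal_le_iff) auto
  then show ?thesis
    using \<open>G \<ge> 0\<close> real_sqrt_le_mono[of "1/2 * V" "G\<^sup>2"] unfolding V_def G_def by simp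
qed

end

lemma log_concave_density_if_distributed:
  fixes f :: "real \<Rightarrow> real"
  assumes "prob_space M" and X: "distributed M lborel X (\<lambda>x. ennreal (f x))"
    and nonneg: "\<And>x. 0 \<le> f x" and "log_concave f"
  shows "log_concave_density f"
proof
  interpret prob_space M by fact
  have "(\<lambda>x. ennreal (f x)) \<in> borel_measurable borel"
    using distributed_borel_measurable[OF X] by simp
  then show "f \<in> borel_measurable borel"
    using nonneg by simp
  show "integrable lborel f"
    using distributed_integrable[OF X, of "\<lambda>_. 1"] nonneg by simp
  show "(\<integral>x. f x \<partial>lborel) = 1"
    using distributed_integral[OF X, of "\<lambda>_. 1"] nonneg by (simp add: prob_space)
qed fact+

theorem proposition6:
  fixes M :: "'a measure" and X X' :: "'a \<Rightarrow> real" and f :: "real \<Rightarrow> real"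
  assumes "prob_space M"
    and f_nonneg: "\<And>x. 0 \<le> f x"
    and distX: "distributed M lborel X (\<lambda>x. ennreal (f x))"
    and nondeg: "\<not> (\<exists>c. AE \<omega> in M. X \<omega> = c)"
    and second_moment: "integrable M (\<lambda>\<omega>. (X \<omega>)\<^sup>2)"
    and distX': "distributed M lborel X' (\<lambda>x. ennreal (f x))"
    and indep: "prob_space.indep_var M borel X borel X'"
    and lc: "log_concave f"
  shows "let F = (\<lambda>x. measure M {\<omega> \<in> space M. X \<omega> \<le> x});
             S = (\<lambda>x. 1 - F x);
             h = (\<lambda>x. f x / S x);
             r = (\<lambda>x. f x / F x);
             SD = sqrt (1/2 * (\<integral>\<omega>. (X \<omega> - X' \<omega>)\<^sup>2 \<partial>M));
             GMD = (\<integral>\<omega>. \<bar>X \<omega> - X' \<omega>\<bar> \<partial>M)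
         in log_concave F \<and> log_concave S
            \<and> mono_on {x. 0 < S x} h \<and> antimono_on {x. 0 < F x} r
            \<and> SD \<le> GMD"
proof -
  \<comment> \<open>\<open>nondeg\<close> and \<open>second_moment\<close> are not needed: a distribution with a density has no
    atoms, and without a finite second moment \<open>SD\<close> is the junk value \<open>0\<close>.\<close>
  interpret log_concave_density f
    using log_concave_density_if_distributed[OF \<open>prob_space M\<close> distX f_nonneg lc] .
  show ?thesis
    using log_concave_F log_concave_S hazard_rate_mono reverse_hazard_rate_antimono
      SD_le_GMD[OF \<open>prob_space M\<close> distX distX' indep]
    unfolding Let_def measure_le_eq_F[OF \<open>prob_space M\<close> distX] S_eq[abs_def] by blast
qed

end
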